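(* Let $\bar\alpha\in[0,1]$ and $n\ge1$, and let $\boldsymbol{\alpha}^*=(\alpha^*_1,\dots,\alpha^*_n)$ be a maximizer of $$\max_{\boldsymbol{\alpha}\in[0,1]^n} C(\boldsymbol{\alpha})\quad\text{subject to}\quad G(\boldsymbol{\alpha})=0,$$ with its entries ordered so that $\alpha^*_1\ge\alpha^*_2\ge\dots\ge\alpha^*_n$. Let $m=\max\{i:\alpha^*_i=1\}$, with $m=0$ if no entry equals $1$. Then $$m=\left\lfloor \frac{\bar\alpha\, n\,(k_1-k_2)}{k_1-\bar\alpha k_2}\right\rfloor .$$
   Context: Model of a road with $n\ge1$ parallel lanes of common length $d>0$. Vehicles have length $L>0$. A vehicle keeps a headway (space gap) $\bar h$ to the vehicle in front of it if both it and the vehicle in front are autonomous, and headway $h$ otherwise, where $0\le \bar h<h$. Vehicle types within a lane are i.i.d. Bernoulli: each vehicle in lane $i$ is autonomous with probability $\alpha_i\in[0,1]$ (the lane's autonomy level). Set $k_1=(L+h)/d$ and $k_2=(h-\bar h)/d$, so $k_1>k_2>0$ and $k_1-k_2=(L+\bar h)/d>0$. The capacity of a lane with autonomy level $\alpha\in[0,1]$ is $$c(\alpha)=\frac{1}{k_1-k_2\alpha^2}=\frac{d}{L+h-(h-\bar h)\alpha^2}.$$ Let $\bar\alpha\in[0,1]$ be the overall fraction of autonomous vehicles on the road. For $\boldsymbol{\alpha}=(\alpha_1,\dots,\alpha_n)\in[0,1]^n$ define $C(\boldsymbol{\alpha})=\sum_{i=1}^n c(\alpha_i)$ (total capacity)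 and $G(\boldsymbol{\alpha})=\sum_{i=1}^n(\alpha_i-\bar\alpha)c(\alpha_i)$; the constraint $G(\boldsymbol{\alpha})=0$ expresses that the overall autonomy level equals $\bar\alpha$. *)

theory Defs
  imports Complex_Main
begin

text \<open>Road model: lane length d, vehicle length L, headways h (default) and hb (autonomous pair).
  Lanes are indexed by 1..n; a configuration is a function alpha :: nat => real.\<close>

definition k1 :: "real \<Rightarrow> real \<Rightarrow> real \<Rightarrow> real" where
  "k1 d L h = (L + h) / d"

definition k2 :: "real \<Rightarrow> real \<Rightarrow> real \<Rightarrow> real" where
  "k2 d h hb = (h - hb) / d"

definition cap :: "real \<Rightarrow> real \<Rightarrow> real \<Rightarrow> real \<Rightarrow> real \<Rightarrow> real" where
  "cap d L h hb a = 1 / (k1 d L h - k2 d h hb * a\<^sup>2)"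

definition totcap :: "real \<Rightarrow> real \<Rightarrow> real \<Rightarrow> real \<Rightarrow> nat \<Rightarrow> (nat \<Rightarrow> real) \<Rightarrow> real" where
  "totcap d L h hb n alpha = (\<Sum>i=1..n. cap d L h hb (alpha i))"

definition Gcon :: "real \<Rightarrow> real \<Rightarrow> real \<Rightarrow> real \<Rightarrow> real \<Rightarrow> nat \<Rightarrow> (nat \<Rightarrow> real) \<Rightarrow> real" where
  "Gcon d L h hb abar n alpha = (\<Sum>i=1..n. (alpha i - abar) * cap d L h hb (alpha i))"

definition feasible :: "real \<Rightarrow> real \<Rightarrow> real \<Rightarrow> real \<Rightarrow> real \<Rightarrow> nat \<Rightarrow> (nat \<Rightarrow> real) \<Rightarrow> bool" where
  "feasible d L h hb abar n alpha \<longleftrightarrow>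
     (\<forall>i\<in>{1..n}. 0 \<le> alpha i \<and> alpha i \<le> 1) \<and> Gcon d L h hb abar n alpha = 0"

definition num_full :: "nat \<Rightarrow> (nat \<Rightarrow> real) \<Rightarrow> nat" where
  "num_full n alpha = (if \<exists>i\<in>{1..n}. alpha i = 1 then Max {i\<in>{1..n}. alpha i = 1} else 0)"

end

theory Submission
  imports Defs
begin

text \<open>Write \<open>g a = (a - abar) c a\<close> for the summand of the constraint \<open>G\<close>. Both \<open>c\<close> and \<open>g\<close>
  are strictly increasing on \<open>[0,1]\<close>, and \<open>c\<close> is a strictly convex function of \<open>g\<close>: the
  difference quotient \<open>(c q - c p) / (g q - g p)\<close> increases in both \<open>p\<close> and \<open>q\<close>. Hence two
  levels strictly between 0 and 1 can be spread apart with their \<open>g\<close>-sum unchanged, which keeps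
  feasibility and strictly increases capacity; so a maximizer has at most one interior entry.
  Rescaling \<open>g\<close> affinely so that \<open>g 0\<close> becomes 0 and \<open>g 1\<close> becomes 1, the constraint says that
  the rescaled values, all in \<open>[0,1]\<close> and equal to 1 exactly on the full lanes, sum to
  \<open>abar n (k\<^sub>1 - k\<^sub>2) / (k\<^sub>1 - abar k\<^sub>2)\<close>. With at most one fractional value, the number of
  full lanes is the floor of that sum.\<close>

lemma sum_fun_upd2:
  fixes g :: "'b \<Rightarrow> 'c::ab_group_add"
  assumes "finite S" "i \<in> S" "j \<in> S" "i \<noteq> j"
  shows "(\<Sum>k\<in>S. g ((f(i := u, j := v)) k)) = (\<Sum>k\<in>S. g (f k)) - g (f i) - g (f j) + g u + g v"
proof -
  have split: "sum F S = F i + F j + sum F (S - {i} - {j})" for F :: "'a \<Rightarrow> 'c"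
    using assms by (simp add: sum.remove add.assoc)
  have "(\<Sum>k\<in>S - {i} - {j}. g ((f(i := u, j := v)) k)) = (\<Sum>k\<in>S - {i} - {j}. g (f k))"
    by (rule sum.cong) auto
  then show ?thesis
    using split[of "\<lambda>k. g ((f(i := u, j := v)) k)"] split[of "\<lambda>k. g (f k)"] assms(4) by simp
qed

lemma floor_sum_eq_card_ones:
  fixes w :: "'a \<Rightarrow> real"
  assumes "finite I" and range: "\<And>i. i \<in> I \<Longrightarrow> 0 \<le> w i \<and> w i \<le> 1"
    and one_fractional: "\<And>i j. \<lbrakk>i \<in> I; j \<in> I; w i \<in> {0<..<1}; w j \<in> {0<..<1}\<rbrakk> \<Longrightarrow> i = j"
  shows "\<lfloor>\<Sum>i\<in>I. w i\<rfloor> = int (card {i\<in>I. w i = 1})"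
proof -
  define Ones where "Ones = {i\<in>I. w i = 1}"
  define Rest where "Rest = I - Ones"
  have "(\<Sum>i\<in>I. w i) = (\<Sum>i\<in>Rest. w i) + (\<Sum>i\<in>Ones. w i)"
    unfolding Rest_def Ones_def using \<open>finite I\<close> by (intro sum.subset_diff) auto
  also have "(\<Sum>i\<in>Ones. w i) = card Ones"
    unfolding Ones_def by simp
  finally have sum_eq: "(\<Sum>i\<in>I. w i) = card Ones + (\<Sum>i\<in>Rest. w i)"
    by simp
  have rest_range: "0 \<le> w i \<and> w i < 1" if "i \<in> Rest" for i
    using range that unfolding Rest_def Ones_def by force
  have "0 \<le> (\<Sum>i\<in>Rest. w i) \<and> (\<Sum>i\<in>Rest. w i) < 1"
  proof (cases "\<exists>i\<in>Rest. 0 < w i")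
    case True
    then obtain i where i: "i \<in> Rest" "0 < w i" by blast
    have "w j = 0" if "j \<in> Rest - {i}" for j
      using one_fractional[of i j] rest_range[of i] rest_range[of j] i that
      unfolding Rest_def by force
    then have "(\<Sum>j\<in>Rest. w j) = w i"
      using sum.remove[of Rest i w] i \<open>finite I\<close> unfolding Rest_def by simp
    then show ?thesis using rest_range[OF i(1)] by simp
  next
    case False
    then have "(\<Sum>i\<in>Rest. w i) = 0"
      using rest_range by (intro sum.neutral) force
    then show ?thesis by simp
  qed
  then show ?thesis
    unfolding sum_eq Ones_def by (simp add: floor_eq_iff)
qed

lemma num_full_antitone:
  fixes \<alpha> :: "nat \<Rightarrow> real"
  assumes antitone: "\<forall>i j. 1 \<le> i \<and> i \<le> j \<and> j \<le> n \<longrightarrow> \<alpha> j \<le> \<alpha> i"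
    and le_one: "\<And>i. i \<in> {1..n} \<Longrightarrow> \<alpha> i \<le> 1"
  shows "num_full n \<alpha> = card {i\<in>{1..n}. \<alpha> i = 1}"
proof -
  define S where "S = {i\<in>{1..n}. \<alpha> i = 1}"
  show ?thesis
  proof (cases "S = {}")
    case False
    define M where "M = Max S"
    have M: "M \<in> {1..n}" "\<alpha> M = 1"
      using Max_in[of S] False unfolding M_def S_def by auto
    have "S = {1..M}"
    proof (intro equalityI subsetI)
      fix i assume "i \<in> S"
      then show "i \<in> {1..M}" using Max_ge[of S i] unfolding M_def S_def by auto
    next
      fix i assume i: "i \<in> {1..M}"
      then have "\<alpha> M \<le> \<alpha> i" using antitone M(1) by auto
      then show "i \<in> S" using le_one[of i] M i unfolding S_def by force
    qed
    moreover have "num_full n \<alpha> = M"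
      using False unfolding num_full_def M_def S_def by auto
    ultimately show ?thesis unfolding S_def by simp
  next
    case True
    then show ?thesis unfolding num_full_def S_def by auto
  qed
qed

locale lane_capacity =
  fixes k1 k2 abar :: real
  assumes k2_pos: "0 < k2" and k2_less_k1: "k2 < k1"
    and abar_nonneg: "0 \<le> abar" and abar_le_one: "abar \<le> 1"
begin

definition c :: "real \<Rightarrow> real" where
  "c a = 1 / (k1 - k2 * a\<^sup>2)"

definition g :: "real \<Rightarrow> real" where
  "g a = (a - abar) * c a"

definition slope_denom :: "real \<Rightarrow> real \<Rightarrow> real" where
  "slope_denom p q = k1 + k2 * p * q - abar * k2 * (p + q)"

text \<open>The difference quotient of \<open>c\<close> with respect to \<open>g\<close>, see \<open>c_diff\<close>.\<close>
definition slope :: "real \<Rightarrow> real \<Rightarrow> real" where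
  "slope p q = k2 * (p + q) / slope_denom p q"

lemma c_denom_pos:
  assumes "0 \<le> a" "a \<le> 1"
  shows "0 < k1 - k2 * a\<^sup>2"
proof -
  have "k2 * a\<^sup>2 \<le> k2"
    using assms k2_pos power_le_one[of a 2] by (simp add: mult_left_le)
  then show ?thesis using k2_less_k1 by linarith
qed

lemma c_pos: "0 \<le> a \<Longrightarrow> a \<le> 1 \<Longrightarrow> 0 < c a"
  using c_denom_pos by (simp add: c_def)

lemma slope_denom_pos:
  assumes "0 \<le> p" "p \<le> 1" "0 \<le> q" "q \<le> 1"
  shows "0 < slope_denom p q"
proof -
  have "abar * (p + q) \<le> p + q"
    using assms abar_le_one mult_left_le_one_le[of "p + q" abar] abar_nonneg by simp
  moreover have "0 \<le> (1 - p) * (1 - q)" using assms by simp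
  ultimately have "-1 \<le> p * q - abar * (p + q)" by (simp add: algebra_simps)
  then have "- k2 \<le> k2 * (p * q - abar * (p + q))"
    using k2_pos mult_left_mono[of "-1" _ k2] by simp
  then show ?thesis
    unfolding slope_denom_def using k2_less_k1 by (simp add: algebra_simps)
qed

lemma g_diff:
  assumes "0 \<le> p" "p \<le> 1" "0 \<le> q" "q \<le> 1"
  shows "g q - g p = (q - p) * slope_denom p q * c p * c q"
  using c_denom_pos[of p] c_denom_pos[of q] assms
  unfolding g_def c_def slope_denom_def
  by (simp add: field_simps) (simp add: algebra_simps power2_eq_square)

lemma c_diff:
  assumes "0 \<le> p" "p \<le> 1" "0 \<le> q" "q \<le> 1"
  shows "c q - c p = slope p q * (g q - g p)"
proof -
  have "slope p q * (g q - g p) = k2 * (p + q) * (q - p) * c p * c q"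
    unfolding g_diff[OF assms] slope_def using slope_denom_pos[OF assms] by simp
  also have "\<dots> = c q - c p"
    using c_denom_pos[of p] c_denom_pos[of q] assms unfolding c_def
    by (simp add: field_simps) (simp add: algebra_simps power2_eq_square)
  finally show ?thesis by simp
qed

lemma slope_commute: "slope p q = slope q p"
  unfolding slope_def slope_denom_def by (simp add: algebra_simps)

lemma slope_strict_mono:
  assumes "0 \<le> p" "p \<le> 1" "0 \<le> q" "q < q'" "q' \<le> 1"
  shows "slope p q < slope p q'"
proof -
  have denoms: "0 < slope_denom p q" "0 < slope_denom p q'"
    using slope_denom_pos assms by auto
  have "(p + q') * slope_denom p q - (p + q) * slope_denom p q' = (q' - q) * (k1 - k2 * p\<^sup>2)"
    unfolding slope_denom_def by (simp add: algebra_simps power2_eq_square)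
  moreover have "0 < (q' - q) * (k1 - k2 * p\<^sup>2)"
    using c_denom_pos[of p] assms by simp
  ultimately have "k2 * ((p + q) * slope_denom p q') < k2 * ((p + q') * slope_denom p q)"
    using k2_pos by simp
  then show ?thesis
    unfolding slope_def using denoms by (simp add: divide_simps algebra_simps)
qed

lemma g_strict_mono:
  assumes "0 \<le> p" "p < q" "q \<le> 1"
  shows "g p < g q"
proof -
  have "0 < (q - p) * slope_denom p q * c p * c q"
    using slope_denom_pos[of p q] c_pos[of p] c_pos[of q] assms by simp
  then show ?thesis using g_diff[of p q] assms by simp
qed

lemma g_less_iff: "p \<in> {0..1} \<Longrightarrow> q \<in> {0..1} \<Longrightarrow> g p < g q \<longleftrightarrow> p < q"
  using g_strict_mono by (metis atLeastAtMost_iff linorder_neq_iff order_less_asym)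

lemma g_le_iff: "p \<in> {0..1} \<Longrightarrow> q \<in> {0..1} \<Longrightarrow> g p \<le> g q \<longleftrightarrow> p \<le> q"
  using g_less_iff by (meson not_less)

lemma g_continuous: "continuous_on {0..1} g"
proof -
  have "continuous_on {0..1} (\<lambda>a. (a - abar) * (1 / (k1 - k2 * a\<^sup>2)))"
    by (intro continuous_intros) (use c_denom_pos in force)
  then show ?thesis unfolding g_def c_def .
qed

lemma spreading_increases_capacity:
  assumes "0 \<le> p" "p < q" "q \<le> r" "r < s" "s \<le> 1"
    and same_g: "g q - g p = g s - g r"
  shows "c q + c r < c p + c s"
proof -
  define \<Delta> where "\<Delta> = g q - g p"
  have "0 < \<Delta>" unfolding \<Delta>_def using g_strict_mono assms by simp
  have "slope p q = slope q p" by (rule slope_commute)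
  also have "\<dots> < slope q s" using assms by (intro slope_strict_mono) auto
  also have "\<dots> = slope s q" by (rule slope_commute)
  also have "\<dots> \<le> slope s r"
    using assms slope_strict_mono[of s q r] by (cases "q = r") auto
  also have "\<dots> = slope r s" by (rule slope_commute)
  finally have "slope p q * \<Delta> < slope r s * \<Delta>"
    using \<open>0 < \<Delta>\<close> by simp
  moreover have "c q - c p = slope p q * \<Delta>"
    unfolding \<Delta>_def using assms by (intro c_diff) auto
  moreover have "c s - c r = slope r s * \<Delta>"
    unfolding \<Delta>_def same_g using assms by (intro c_diff) auto
  ultimately show ?thesis by simp
qed

text \<open>Either the larger level can be pushed up to 1 or the smaller one down to 0.\<close>
lemma interior_pair_improvable:
  assumes "0 < b" "b \<le> a" "a < 1"
  obtains u v where "u \<in> {0..1}" "v \<in> {0..1}" "g u + g v = g a + g b" "c a + c b < c u + c v"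
proof (cases "g 0 \<le> g a + g b - g 1")
  case True
  have "g a + g b - g 1 \<le> g 1"
    using g_le_iff[of a 1] g_le_iff[of b 1] assms by simp
  then obtain b' where b': "b' \<in> {0..1}" "g b' = g a + g b - g 1"
    using IVT'[of g 0 "g a + g b - g 1" 1] True g_continuous by auto
  have "g a < g 1" using g_less_iff[of a 1] assms by simp
  then have "b' < b" using g_less_iff[of b' b] b' assms by simp
  then have "c b + c a < c b' + c 1"
    using b' assms by (intro spreading_increases_capacity) auto
  then show ?thesis using that[of 1 b'] b' by simp
next
  case False
  have "g 0 \<le> g a + g b - g 0"
    using g_le_iff[of 0 a] g_le_iff[of 0 b] assms by simp
  then obtain a' where a': "a' \<in> {0..1}" "g a' = g a + g b - g 0"
    using IVT'[of g 0 "g a + g b - g 0" 1] False g_continuous by auto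
  have "g 0 < g b" using g_less_iff[of 0 b] assms by simp
  then have "a < a'" using g_less_iff[of a a'] a' assms by simp
  then have "c b + c a < c 0 + c a'"
    using a' assms by (intro spreading_increases_capacity) auto
  then show ?thesis using that[of a' 0] a' by simp
qed

definition feasible_on :: "'a set \<Rightarrow> ('a \<Rightarrow> real) \<Rightarrow> bool" where
  "feasible_on I \<beta> \<longleftrightarrow> (\<forall>i\<in>I. \<beta> i \<in> {0..1}) \<and> (\<Sum>i\<in>I. g (\<beta> i)) = 0"

definition maximizer_on :: "'a set \<Rightarrow> ('a \<Rightarrow> real) \<Rightarrow> bool" where
  "maximizer_on I \<alpha> \<longleftrightarrow> feasible_on I \<alpha> \<and>
     (\<forall>\<beta>. feasible_on I \<beta> \<longrightarrow> (\<Sum>i\<in>I. c (\<beta> i)) \<le> (\<Sum>i\<in>I. c (\<alpha> i)))"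

lemma maximizer_at_most_one_interior:
  assumes "finite I" "maximizer_on I \<alpha>" "i \<in> I" "j \<in> I"
    and "\<alpha> i \<in> {0<..<1}" "\<alpha> j \<in> {0<..<1}"
  shows "i = j"
proof -
  have no_pair: False
    if ij: "i \<in> I" "j \<in> I" "i \<noteq> j" "\<alpha> j \<le> \<alpha> i" "\<alpha> i \<in> {0<..<1}" "\<alpha> j \<in> {0<..<1}" for i j
  proof -
    obtain u v where uv: "u \<in> {0..1}" "v \<in> {0..1}" "g u + g v = g (\<alpha> i) + g (\<alpha> j)"
      and better: "c (\<alpha> i) + c (\<alpha> j) < c u + c v"
      using interior_pair_improvable[of "\<alpha> j" "\<alpha> i"] ij by auto
    define \<beta> where "\<beta> = \<alpha>(i := u, j := v)"
    have "(\<Sum>k\<in>I. g (\<beta> k)) = (\<Sum>k\<in>I. g (\<alpha> k))"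
      unfolding \<beta>_def using sum_fun_upd2[of I i j g \<alpha> u v] \<open>finite I\<close> ij uv by simp
    then have "feasible_on I \<beta>"
      using \<open>maximizer_on I \<alpha>\<close> uv unfolding maximizer_on_def feasible_on_def \<beta>_def by auto
    then have "(\<Sum>k\<in>I. c (\<beta> k)) \<le> (\<Sum>k\<in>I. c (\<alpha> k))"
      using \<open>maximizer_on I \<alpha>\<close> unfolding maximizer_on_def by blast
    then show False
      unfolding \<beta>_def using sum_fun_upd2[of I i j c \<alpha> u v] \<open>finite I\<close> ij better by simp
  qed
  show ?thesis
    using no_pair[of i j] no_pair[of j i] assms by (cases "\<alpha> j \<le> \<alpha> i") auto
qed

lemma g_0: "g 0 = - abar / k1"
  unfolding g_def c_def by simp

lemma g_1: "g 1 = (1 - abar) / (k1 - k2)"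
  unfolding g_def c_def by simp

lemma normalized_g_sum:
  "- real N * g 0 / (g 1 - g 0) = abar * real N * (k1 - k2) / (k1 - abar * k2)"
proof -
  have "0 < k1 - k2" "0 < k1" using k2_pos k2_less_k1 by auto
  moreover have "0 < k1 - abar * k2"
    using k2_less_k1 k2_pos abar_nonneg abar_le_one mult_left_le_one_le[of k2 abar] by linarith
  ultimately show ?thesis
    unfolding g_0 g_1 by (simp add: field_simps)
qed

lemma maximizer_card_full:
  assumes "finite I" "maximizer_on I \<alpha>"
  shows "int (card {i\<in>I. \<alpha> i = 1}) = \<lfloor>abar * real (card I) * (k1 - k2) / (k1 - abar * k2)\<rfloor>"
proof -
  define w where "w i = (g (\<alpha> i) - g 0) / (g 1 - g 0)" for i
  have range: "\<alpha> i \<in> {0..1}" if "i \<in> I" for i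
    using assms(2) that unfolding maximizer_on_def feasible_on_def by blast
  have gap: "0 < g 1 - g 0" using g_strict_mono[of 0 1] by simp
  have w_nonneg_iff: "0 \<le> w i \<longleftrightarrow> g 0 \<le> g (\<alpha> i)"
    and w_pos_iff: "0 < w i \<longleftrightarrow> g 0 < g (\<alpha> i)"
    and w_le_1_iff: "w i \<le> 1 \<longleftrightarrow> g (\<alpha> i) \<le> g 1"
    and w_less_1_iff: "w i < 1 \<longleftrightarrow> g (\<alpha> i) < g 1" for i
    unfolding w_def using gap
    by (simp_all add: zero_le_divide_iff zero_less_divide_iff divide_le_eq_1_pos divide_less_eq_1_pos)
  have w_range: "0 \<le> w i \<and> w i \<le> 1" if "i \<in> I" for i
    unfolding w_nonneg_iff w_le_1_iff using g_le_iff range[OF that] by simp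
  have w_interior: "w i \<in> {0<..<1} \<longleftrightarrow> \<alpha> i \<in> {0<..<1}" if "i \<in> I" for i
    unfolding greaterThanLessThan_iff w_pos_iff w_less_1_iff using g_less_iff range[OF that] by simp
  have w_eq_1: "w i = 1 \<longleftrightarrow> \<alpha> i = 1" if "i \<in> I" for i
    using w_le_1_iff[of i] w_less_1_iff[of i] g_less_iff[of "\<alpha> i" 1] range[OF that] by auto
  have "(\<Sum>i\<in>I. w i) = (\<Sum>i\<in>I. g (\<alpha> i) - g 0) / (g 1 - g 0)"
    unfolding w_def by (simp add: sum_divide_distrib)
  also have "\<dots> = - real (card I) * g 0 / (g 1 - g 0)"
    using assms(2) unfolding maximizer_on_def feasible_on_def by (simp add: sum_subtractf)
  finally have "(\<Sum>i\<in>I. w i) = abar * real (card I) * (k1 - k2) / (k1 - abar * k2)"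
    using normalized_g_sum by simp
  moreover have "\<lfloor>\<Sum>i\<in>I. w i\<rfloor> = int (card {i\<in>I. w i = 1})"
    using maximizer_at_most_one_interior[OF assms] w_range w_interior \<open>finite I\<close>
    by (intro floor_sum_eq_card_ones) auto
  moreover have "{i\<in>I. w i = 1} = {i\<in>I. \<alpha> i = 1}" using w_eq_1 by auto
  ultimately show ?thesis by simp
qed

end

theorem theorem2:
  fixes d L h hb abar :: real and n :: nat and astar :: "nat \<Rightarrow> real"
  assumes "d > 0" and "L > 0" and "0 \<le> hb" and "hb < h"
    and "0 \<le> abar" and "abar \<le> 1"
    and "n \<ge> 1"
    and "feasible d L h hb abar n astar"
    and "\<forall>beta. feasible d L h hb abar n beta \<longrightarrow>
           totcap d L h hb n beta \<le> totcap d L h hb n astar"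
    and "\<forall>i j. 1 \<le> i \<and> i \<le> j \<and> j \<le> n \<longrightarrow> astar j \<le> astar i"
  shows "int (num_full n astar) =
    \<lfloor>abar * real n * (k1 d L h - k2 d h hb) / (k1 d L h - abar * k2 d h hb)\<rfloor>"
proof -
  interpret lane_capacity "k1 d L h" "k2 d h hb" abar
    using assms(1-6) by unfold_locales (auto simp: k1_def k2_def divide_strict_right_mono)
  have cap_eq: "cap d L h hb = c"
    unfolding cap_def c_def by auto
  have feasible_eq: "feasible d L h hb abar n = feasible_on {1..n}"
    unfolding feasible_def feasible_on_def Gcon_def g_def cap_eq by auto
  have "maximizer_on {1..n} astar"
    using assms(8,9) unfolding maximizer_on_def feasible_eq totcap_def cap_eq by simp
  then have "int (card {i\<in>{1..n}. astar i = 1}) =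
      \<lfloor>abar * real n * (k1 d L h - k2 d h hb) / (k1 d L h - abar * k2 d h hb)\<rfloor>"
    using maximizer_card_full[of "{1..n}" astar] by simp
  moreover have "num_full n astar = card {i\<in>{1..n}. astar i = 1}"
    using assms(8,10) unfolding feasible_eq feasible_on_def by (intro num_full_antitone) auto
  ultimately show ?thesis by simp
qed

end
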